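(* For every integer $n\ge 1$, let $M_T(n)$ denote the maximum modulus of an independence root over all trees on $n$ vertices. Then $$M_T(n)\ge \begin{cases} 2^{\frac{n-1}{2}} & \text{if } n \text{ is odd},\\ 2^{\frac{n-6}{2}} & \text{if } n \text{ is even}.\end{cases}$$
   Context: For a finite simple graph $G$, the independence polynomial is $i(G,x)=\sum_{k=0}^{\alpha(G)} i_k x^k$, where $i_k$ is the number of independent sets of size $k$ in $G$ (with $i_0=1$) and $\alpha(G)$ is the independence number. Its complex roots are the independence roots of $G$. *)

theory Defs
  imports Complex_Main "HOL-Computational_Algebra.Polynomial"
begin

text \<open>Finite simple graphs on the vertex set {0..<n}, given by a symmetric,
  irreflexive adjacency relation E whose edges lie inside {0..<n}.
  Every finite graph on n vertices is isomorphic to one of these.\<close>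

definition simple_graph_on :: "nat \<Rightarrow> (nat \<Rightarrow> nat \<Rightarrow> bool) \<Rightarrow> bool" where
  "simple_graph_on n E \<longleftrightarrow>
     (\<forall>x y. E x y \<longrightarrow> E y x) \<and> (\<forall>x. \<not> E x x) \<and> (\<forall>x y. E x y \<longrightarrow> x < n \<and> y < n)"

definition connected_on :: "nat \<Rightarrow> (nat \<Rightarrow> nat \<Rightarrow> bool) \<Rightarrow> bool" where
  "connected_on n E \<longleftrightarrow> (\<forall>x<n. \<forall>y<n. E\<^sup>*\<^sup>* x y)"

definition is_cycle :: "(nat \<Rightarrow> nat \<Rightarrow> bool) \<Rightarrow> nat list \<Rightarrow> bool" where
  "is_cycle E vs \<longleftrightarrow> length vs \<ge> 3 \<and> distinct vs \<and>
     (\<forall>i < length vs. E (vs ! i) (vs ! ((i + 1) mod length vs)))"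

definition acyclic_graph :: "(nat \<Rightarrow> nat \<Rightarrow> bool) \<Rightarrow> bool" where
  "acyclic_graph E \<longleftrightarrow> \<not> (\<exists>vs. is_cycle E vs)"

definition is_tree :: "nat \<Rightarrow> (nat \<Rightarrow> nat \<Rightarrow> bool) \<Rightarrow> bool" where
  "is_tree n E \<longleftrightarrow> simple_graph_on n E \<and> connected_on n E \<and> acyclic_graph E"

definition indep_set :: "nat \<Rightarrow> (nat \<Rightarrow> nat \<Rightarrow> bool) \<Rightarrow> nat set \<Rightarrow> bool" where
  "indep_set n E S \<longleftrightarrow> S \<subseteq> {0..<n} \<and> (\<forall>x\<in>S. \<forall>y\<in>S. \<not> E x y)"

definition ind_poly :: "nat \<Rightarrow> (nat \<Rightarrow> nat \<Rightarrow> bool) \<Rightarrow> complex poly" where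
  "ind_poly n E = (\<Sum>S\<in>{S. indep_set n E S}. monom 1 (card S))"

definition M_T :: "nat \<Rightarrow> real" where
  "M_T n = Max {cmod z | z E. is_tree n E \<and> poly (ind_poly n E) z = 0}"

end

theory Submission
  imports Defs
begin

text \<open>For odd \<open>n = 2m + 1\<close> take the spider with \<open>m\<close> legs of length two. Its
  independence polynomial is \<open>x (1 + x)^m + (1 + 2x)^m\<close>; at \<open>x = -2^m\<close> the second
  term dominates, at \<open>x = -(2^m + m + 1)\<close> the first one does (Bernoulli's inequality),
  so by the intermediate value theorem there is a real root of modulus at least \<open>2^m\<close>.
  For even \<open>n = 2k + 6\<close> the same argument applies to the tree obtained by attaching
  \<open>k\<close> legs of length two to a fixed six-vertex tree, and \<open>n = 2, 4\<close> are settled by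
  paths. Independence polynomials are computed by deleting the largest vertex, which is
  why trees are encoded by a parent function with \<open>par y < y\<close>.\<close>

definition indep_sum :: "nat \<Rightarrow> (nat \<Rightarrow> nat \<Rightarrow> bool) \<Rightarrow> (nat set \<Rightarrow> bool) \<Rightarrow> real \<Rightarrow> real" where
  "indep_sum n H P x = (\<Sum>S\<in>{S. S \<subseteq> {0..<n} \<and> (\<forall>a\<in>S. \<forall>b\<in>S. \<not> H a b) \<and> P S}. x ^ card S)"

lemma finite_subsets_atLeastLessThan: "finite {S. S \<subseteq> {0..<n::nat} \<and> Q S}"
  by (rule finite_subset[of _ "Pow {0..<n}"]) auto

lemma indep_sum_0: "indep_sum 0 H P x = (if P {} then 1 else 0)"
proof -
  have "{S. S \<subseteq> {0..<0::nat} \<and> (\<forall>a\<in>S. \<forall>b\<in>S. \<not> H a b) \<and> P S} = (if P {} then {{}} else {})"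
    by auto
  then show ?thesis by (simp add: indep_sum_def)
qed

lemma indep_sum_Suc:
  "indep_sum (Suc n) H P x = indep_sum n H P x +
     x * indep_sum n H (\<lambda>S. (\<forall>a\<in>S. \<not> H a n \<and> \<not> H n a) \<and> \<not> H n n \<and> P (insert n S)) x"
proof -
  define U where "U = {S. S \<subseteq> {0..<n} \<and> (\<forall>a\<in>S. \<forall>b\<in>S. \<not> H a b) \<and> P S}"
  define V where "V = {S. S \<subseteq> {0..<n} \<and> (\<forall>a\<in>S. \<forall>b\<in>S. \<not> H a b) \<and>
     (\<forall>a\<in>S. \<not> H a n \<and> \<not> H n a) \<and> \<not> H n n \<and> P (insert n S)}"
  have split: "{S. S \<subseteq> {0..<Suc n} \<and> (\<forall>a\<in>S. \<forall>b\<in>S. \<not> H a b) \<and> P S} = U \<union> insert n ` V"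
  proof (intro set_eqI iffI)
    fix S assume S: "S \<in> {S. S \<subseteq> {0..<Suc n} \<and> (\<forall>a\<in>S. \<forall>b\<in>S. \<not> H a b) \<and> P S}"
    show "S \<in> U \<union> insert n ` V"
    proof (cases "n \<in> S")
      case True
      then have "S = insert n (S - {n})" and "S - {n} \<in> V"
        using S by (auto simp: V_def insert_absorb)
      then show ?thesis by blast
    next
      case False
      then have "S \<subseteq> {0..<n}" using S by (auto simp: less_Suc_eq)
      then show ?thesis using S by (simp add: U_def)
    qed
  qed (auto simp: U_def V_def)
  have finite_UV: "finite U" "finite V"
    unfolding U_def V_def by (rule finite_subsets_atLeastLessThan)+
  have n_notin: "n \<notin> S" "finite S" if "S \<in> V" for S
    using that finite_subset[of S "{0..<n}"] by (auto simp: V_def)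
  have "inj_on (insert n) V"
    by (rule inj_onI) (metis n_notin(1) Diff_insert_absorb)
  then have "(\<Sum>S\<in>insert n ` V. x ^ card S) = (\<Sum>S\<in>V. x * x ^ card S)"
    by (simp add: sum.reindex n_notin)
  moreover have "U \<inter> insert n ` V = {}" by (auto simp: U_def V_def)
  ultimately show ?thesis
    unfolding indep_sum_def split using finite_UV
    by (simp add: sum.union_disjoint sum_distrib_left U_def V_def)
qed

lemma indep_sum_cong:
  "(\<And>S. S \<subseteq> {0..<n} \<Longrightarrow> P S = Q S) \<Longrightarrow> indep_sum n H P x = indep_sum n H Q x"
  unfolding indep_sum_def by (rule sum.cong) auto

lemma indep_sum_False [simp]: "indep_sum n H (\<lambda>S. False) x = 0"
  unfolding indep_sum_def by simp

lemma indep_sum_notin_self: "indep_sum n H (\<lambda>S. n \<notin> S \<and> P S) x = indep_sum n H P x"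
  by (rule indep_sum_cong) auto

lemma indep_sum_split:
  "indep_sum n H P x = indep_sum n H (\<lambda>S. P S \<and> Q S) x + indep_sum n H (\<lambda>S. P S \<and> \<not> Q S) x"
proof -
  let ?U = "{S. S \<subseteq> {0..<n} \<and> (\<forall>a\<in>S. \<forall>b\<in>S. \<not> H a b) \<and> P S}"
  have "(\<Sum>S\<in>?U. x ^ card S) = (\<Sum>S\<in>?U \<inter> {S. Q S}. x ^ card S) + (\<Sum>S\<in>?U - {S. Q S}. x ^ card S)"
    using finite_subsets_atLeastLessThan by (rule sum.Int_Diff)
  moreover have "?U \<inter> {S. Q S} = {S. S \<subseteq> {0..<n} \<and> (\<forall>a\<in>S. \<forall>b\<in>S. \<not> H a b) \<and> P S \<and> Q S}"
    and "?U - {S. Q S} = {S. S \<subseteq> {0..<n} \<and> (\<forall>a\<in>S. \<forall>b\<in>S. \<not> H a b) \<and> P S \<and> \<not> Q S}"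
    by blast+
  ultimately show ?thesis unfolding indep_sum_def by simp
qed

definition restrict_graph :: "nat \<Rightarrow> (nat \<Rightarrow> nat \<Rightarrow> bool) \<Rightarrow> nat \<Rightarrow> nat \<Rightarrow> bool" where
  "restrict_graph n H x y \<longleftrightarrow> H x y \<and> x < n \<and> y < n"

lemma indep_set_restrict_graph:
  "indep_set n (restrict_graph n H) S \<longleftrightarrow> S \<subseteq> {0..<n} \<and> (\<forall>a\<in>S. \<forall>b\<in>S. \<not> H a b)"
  unfolding indep_set_def restrict_graph_def by (meson atLeastLessThan_iff subsetD)

lemma poly_ind_poly_restrict_graph:
  "poly (ind_poly n (restrict_graph n H)) (of_real x) = of_real (indep_sum n H (\<lambda>_. True) x)"
  unfolding ind_poly_def indep_sum_def indep_set_restrict_graph poly_sum poly_monom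
    of_real_sum of_real_power
  by simp

lemma ind_poly_nonzero: "ind_poly n E \<noteq> 0"
proof -
  let ?I = "{S. indep_set n E S}"
  have finite_I: "finite ?I"
    unfolding indep_set_def by (rule finite_subsets_atLeastLessThan)
  have "poly (ind_poly n E) 0 = (\<Sum>S\<in>?I. 0 ^ card S)"
    by (simp add: ind_poly_def poly_sum poly_monom)
  also have "\<dots> = (\<Sum>S\<in>?I. if S = {} then 1 else 0)"
    by (rule sum.cong) (auto simp: indep_set_def power_0_left dest: finite_subset)
  also have "\<dots> = 1" using finite_I by (simp add: sum.delta' indep_set_def)
  finally show ?thesis by auto
qed

lemma finite_simple_graphs: "finite {E. simple_graph_on n E}"
proof (rule finite_imageD)
  let ?f = "\<lambda>E. {(x, y). E x y}"
  show "finite (?f ` {E. simple_graph_on n E})"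
    by (rule finite_subset[of _ "Pow ({0..<n} \<times> {0..<n})"]) (auto simp: simple_graph_on_def)
  show "inj_on ?f {E. simple_graph_on n E}"
    by (auto simp: inj_on_def fun_eq_iff set_eq_iff)
qed

lemma norm_tree_root_le_M_T:
  assumes "is_tree n E" "poly (ind_poly n E) z = 0"
  shows "cmod z \<le> M_T n"
proof -
  let ?A = "{cmod z | z E. is_tree n E \<and> poly (ind_poly n E) z = 0}"
  have "?A \<subseteq> cmod ` (\<Union>E\<in>{E. simple_graph_on n E}. {z. poly (ind_poly n E) z = 0})"
    unfolding is_tree_def by blast
  moreover have "finite (\<Union>E\<in>{E. simple_graph_on n E}. {z. poly (ind_poly n E) z = 0})"
    using finite_simple_graphs poly_roots_finite[OF ind_poly_nonzero] by blast
  ultimately have "finite ?A" using finite_subset by blast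
  moreover have "cmod z \<in> ?A" using assms by blast
  ultimately show ?thesis unfolding M_T_def by (rule Max_ge)
qed

lemma is_cycle_max_vertex:
  assumes "is_cycle E vs"
  obtains u v w where "E u v" "E v w" "u < v" "w < v" "u \<noteq> w"
proof -
  define L where "L = length vs"
  have L: "3 \<le> L" and distinct: "distinct vs"
    and edge: "\<And>i. i < L \<Longrightarrow> E (vs ! i) (vs ! ((i + 1) mod L))"
    using assms unfolding is_cycle_def L_def by auto
  have "Max (set vs) \<in> set vs" using L unfolding L_def by (intro Max_in) auto
  then obtain i where i: "i < L" "vs ! i = Max (set vs)" by (auto simp: in_set_conv_nth L_def)
  have below_max: "j < L \<Longrightarrow> j \<noteq> i \<Longrightarrow> vs ! j < vs ! i" for j
    using i distinct nth_eq_iff_index_eq[OF distinct, of j i]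
    by (metis L_def Max_ge finite_set le_neq_implies_less nth_mem)
  define p where "p = (if i = 0 then L - 1 else i - 1)"
  define j where "j = (i + 1) mod L"
  have p: "p < L" "p \<noteq> i" "(p + 1) mod L = i" and j: "j < L" "j \<noteq> i" and "p \<noteq> j"
    using L i(1) unfolding p_def j_def by (auto simp: mod_Suc)
  show ?thesis
  proof (rule that)
    show "E (vs ! p) (vs ! i)" using edge[OF p(1)] p(3) by simp
    show "E (vs ! i) (vs ! j)" using edge[OF i(1)] unfolding j_def .
    show "vs ! p < vs ! i" "vs ! j < vs ! i" using below_max p j by auto
    show "vs ! p \<noteq> vs ! j"
      using nth_eq_iff_index_eq[OF distinct] p(1) j(1) \<open>p \<noteq> j\<close> unfolding L_def by blast
  qed
qed

definition parent_graph :: "(nat \<Rightarrow> nat) \<Rightarrow> nat \<Rightarrow> nat \<Rightarrow> bool" where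
  "parent_graph par x y \<longleftrightarrow> (0 < y \<and> x = par y) \<or> (0 < x \<and> y = par x)"

locale parent_tree =
  fixes par :: "nat \<Rightarrow> nat"
  assumes parent_less: "0 < y \<Longrightarrow> par y < y"
begin

abbreviation tree :: "nat \<Rightarrow> nat \<Rightarrow> nat \<Rightarrow> bool" where
  "tree n \<equiv> restrict_graph n (parent_graph par)"

lemma tree_sym: "tree n x y \<Longrightarrow> tree n y x"
  unfolding restrict_graph_def parent_graph_def by auto

lemma tree_smaller_neighbour: "tree n v w \<Longrightarrow> w < v \<Longrightarrow> w = par v"
  using parent_less[of w] unfolding restrict_graph_def parent_graph_def by auto

lemma rtranclp_tree_root: "x < n \<Longrightarrow> (tree n)\<^sup>*\<^sup>* x 0"
proof (induction x rule: less_induct)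
  case (less x)
  show ?case
  proof (cases "x = 0")
    case False
    then have "par x < x" by (simp add: parent_less)
    then have "(tree n)\<^sup>*\<^sup>* (par x) 0" using less by simp
    moreover have "tree n x (par x)"
      using False less.prems \<open>par x < x\<close> by (auto simp: restrict_graph_def parent_graph_def)
    ultimately show ?thesis by (rule converse_rtranclp_into_rtranclp[rotated])
  qed simp
qed

lemma is_tree_tree: "1 \<le> n \<Longrightarrow> is_tree n (tree n)"
proof -
  have "simple_graph_on n (tree n)"
    unfolding simple_graph_on_def restrict_graph_def parent_graph_def
    by (auto dest: parent_less)
  moreover have "connected_on n (tree n)"
  proof -
    have "symp (tree n)\<^sup>*\<^sup>*" by (rule symp_rtranclp) (auto intro: sympI tree_sym)
    then show ?thesis unfolding connected_on_def
      by (meson rtranclp_tree_root rtranclp_trans sympD)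
  qed
  moreover have "acyclic_graph (tree n)"
    unfolding acyclic_graph_def
  proof
    assume "\<exists>vs. is_cycle (tree n) vs"
    then obtain u v w where "tree n u v" "tree n v w" "u < v" "w < v" "u \<noteq> w"
      using is_cycle_max_vertex by metis
    then show False using tree_smaller_neighbour tree_sym by metis
  qed
  ultimately show "is_tree n (tree n)" unfolding is_tree_def by blast
qed

lemma abs_root_le_M_T:
  assumes "1 \<le> n" "indep_sum n (parent_graph par) (\<lambda>_. True) x = 0"
  shows "\<bar>x\<bar> \<le> M_T n"
  using norm_tree_root_le_M_T[OF is_tree_tree[OF assms(1)], of "of_real x"] assms(2)
  by (simp add: poly_ind_poly_restrict_graph)

lemma indep_sum_Suc_parent:
  assumes "0 < n"
  shows "indep_sum (Suc n) (parent_graph par) P x = indep_sum n (parent_graph par) P x +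
     x * indep_sum n (parent_graph par) (\<lambda>S. par n \<notin> S \<and> P (insert n S)) x"
proof -
  have adjacent_iff: "((\<forall>a\<in>S. \<not> parent_graph par a n \<and> \<not> parent_graph par n a) \<and> \<not> parent_graph par n n)
      \<longleftrightarrow> par n \<notin> S" if "S \<subseteq> {0..<n}" for S
    using that assms parent_less unfolding parent_graph_def
    by (metis atLeastLessThan_iff less_asym less_irrefl subsetD)
  have "indep_sum n (parent_graph par)
      (\<lambda>S. (\<forall>a\<in>S. \<not> parent_graph par a n \<and> \<not> parent_graph par n a) \<and> \<not> parent_graph par n n \<and> P (insert n S)) x
    = indep_sum n (parent_graph par) (\<lambda>S. par n \<notin> S \<and> P (insert n S)) x"
    by (rule indep_sum_cong) (use adjacent_iff in blast)
  then show ?thesis by (simp add: indep_sum_Suc)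
qed

text \<open>Hanging the leg \<open>0 - n - (n + 1)\<close> at the root: the first term counts the independent
  sets avoiding the inner vertex \<open>n\<close>, the second those containing it, which forces the
  root out.\<close>

lemma indep_sum_add_leg:
  assumes "0 < n" "par n = 0" "par (Suc n) = n"
    and Q: "\<And>m S. 0 < m \<Longrightarrow> Q (insert m S) \<longleftrightarrow> Q S"
  shows "indep_sum (Suc (Suc n)) (parent_graph par) Q x
           = (1 + x) * indep_sum n (parent_graph par) Q x
             + x * indep_sum n (parent_graph par) (\<lambda>S. 0 \<notin> S \<and> Q S) x"
proof -
  have "indep_sum (Suc (Suc n)) (parent_graph par) Q x
      = indep_sum (Suc n) (parent_graph par) Q x
        + x * indep_sum (Suc n) (parent_graph par) (\<lambda>S. n \<notin> S \<and> Q S) x"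
    using indep_sum_Suc_parent[of "Suc n" Q x] assms(3) Q[of "Suc n"] by simp
  also have "indep_sum (Suc n) (parent_graph par) Q x
      = indep_sum n (parent_graph par) Q x + x * indep_sum n (parent_graph par) (\<lambda>S. 0 \<notin> S \<and> Q S) x"
    using indep_sum_Suc_parent[OF assms(1), of Q x] assms(1,2) Q[of n] by simp
  also have "indep_sum (Suc n) (parent_graph par) (\<lambda>S. n \<notin> S \<and> Q S) x
      = indep_sum n (parent_graph par) Q x"
    using indep_sum_Suc_parent[OF assms(1), of "\<lambda>S. n \<notin> S \<and> Q S" x]
    by (simp add: indep_sum_notin_self)
  finally show ?thesis by (simp add: algebra_simps)
qed

end

definition spider_parent :: "nat \<Rightarrow> nat" where
  "spider_parent y = (if odd y then 0 else y - 1)"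

interpretation spider: parent_tree spider_parent
  by unfold_locales (auto simp: spider_parent_def)

lemma spider_indep_sum:
  "indep_sum (2 * m + 1) (parent_graph spider_parent) (\<lambda>_. True) x = x * (1 + x) ^ m + (1 + 2 * x) ^ m"
proof -
  have "indep_sum (2 * m + 1) (parent_graph spider_parent) (\<lambda>S. 0 \<in> S) x = x * (1 + x) ^ m \<and>
        indep_sum (2 * m + 1) (parent_graph spider_parent) (\<lambda>S. 0 \<notin> S) x = (1 + 2 * x) ^ m"
  proof (induction m)
    case 0
    have one: "2 * 0 + 1 = Suc 0" by simp
    show ?case unfolding one by (simp add: indep_sum_Suc indep_sum_0 parent_graph_def)
  next
    case (Suc m)
    have m: "2 * Suc m + 1 = Suc (Suc (2 * m + 1))" by simp
    have "spider_parent (2 * m + 1) = 0" "spider_parent (Suc (2 * m + 1)) = 2 * m + 1"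
      by (simp_all add: spider_parent_def)
    then show ?case unfolding m
      using spider.indep_sum_add_leg[of "2 * m + 1" "\<lambda>S. 0 \<in> S" x]
        spider.indep_sum_add_leg[of "2 * m + 1" "\<lambda>S. 0 \<notin> S" x] Suc.IH
      by (simp add: algebra_simps)
  qed
  then show ?thesis
    using indep_sum_split[of "2 * m + 1" "parent_graph spider_parent" "\<lambda>_. True" x "\<lambda>S. 0 \<in> S"]
    by simp
qed

text \<open>The tree with edges \<open>0 - 1\<close>, \<open>1 - 2\<close>, \<open>1 - 3\<close>, \<open>2 - 4\<close>, \<open>2 - 5\<close>, followed by legs
  of length two at \<open>0\<close>.\<close>

definition six_tree_parent :: "nat \<Rightarrow> nat" where
  "six_tree_parent y =
     (if y = 1 then 0 else if y \<le> 3 then 1 else if y \<le> 5 then 2 else if even y then 0 else y - 1)"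

interpretation six_tree: parent_tree six_tree_parent
  by unfold_locales (auto simp: six_tree_parent_def)

lemma six_tree_indep_sum:
  "indep_sum (2 * k + 6) (parent_graph six_tree_parent) (\<lambda>_. True) x
     = x * (1 + x) * (1 + 3 * x + x\<^sup>2) * (1 + x) ^ k + (1 + x) * (1 + 4 * x + 2 * x\<^sup>2) * (1 + 2 * x) ^ k"
proof -
  have "indep_sum (2 * k + 6) (parent_graph six_tree_parent) (\<lambda>S. 0 \<in> S) x
          = x * (1 + x) * (1 + 3 * x + x\<^sup>2) * (1 + x) ^ k \<and>
        indep_sum (2 * k + 6) (parent_graph six_tree_parent) (\<lambda>S. 0 \<notin> S) x
          = (1 + x) * (1 + 4 * x + 2 * x\<^sup>2) * (1 + 2 * x) ^ k"
  proof (induction k)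
    case 0
    have six: "2 * 0 + 6 = Suc (Suc (Suc (Suc (Suc (Suc 0)))))" by simp
    show ?case unfolding six
      by (simp add: indep_sum_Suc indep_sum_0 parent_graph_def six_tree_parent_def insert_commute
          algebra_simps power2_eq_square)
  next
    case (Suc k)
    have k: "2 * Suc k + 6 = Suc (Suc (2 * k + 6))" by simp
    have "six_tree_parent (2 * k + 6) = 0" "six_tree_parent (Suc (2 * k + 6)) = 2 * k + 6"
      by (simp_all add: six_tree_parent_def)
    then show ?case unfolding k
      using six_tree.indep_sum_add_leg[of "2 * k + 6" "\<lambda>S. 0 \<in> S" x]
        six_tree.indep_sum_add_leg[of "2 * k + 6" "\<lambda>S. 0 \<notin> S" x] Suc.IH
      by (simp add: algebra_simps)
  qed
  then show ?thesis
    using indep_sum_split[of "2 * k + 6" "parent_graph six_tree_parent" "\<lambda>_. True" x "\<lambda>S. 0 \<in> S"]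
    by simp
qed

lemma Bernoulli_inequality_scaled:
  fixes s :: real
  assumes "1 \<le> s"
  shows "s ^ m * (s - m) \<le> s * (s - 1) ^ m"
proof -
  have pos: "0 < s" using assms by simp
  have "1 + real m * (- 1 / s) \<le> (1 + - 1 / s) ^ m"
    using assms by (intro Bernoulli_inequality) (simp add: field_simps)
  also have "\<dots> = (s - 1) ^ m / s ^ m"
    using pos by (simp add: power_divide field_simps)
  finally have "(s - m) / s \<le> (s - 1) ^ m / s ^ m"
    using pos by (simp add: field_simps)
  then show ?thesis
    using pos by (simp add: divide_le_eq le_divide_eq mult.commute mult.left_commute)
qed

lemma spider_poly_root:
  "\<exists>x::real. x \<le> - (2 ^ m) \<and> x * (1 + x) ^ m + (1 + 2 * x) ^ m = 0"
proof -
  define g where "g s = (2 * s - 1) ^ m - s * (s - 1) ^ m" for s :: real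
  define t :: real where "t = 2 ^ m"
  define u where "u = t + m + 1"
  have "1 \<le> t" "t \<le> u" unfolding t_def u_def by simp_all
  have "t * (t - 1) ^ m = (2 * t - 2) ^ m"
    unfolding t_def by (simp add: power_mult_distrib[symmetric] algebra_simps)
  also have "\<dots> \<le> (2 * t - 1) ^ m" using \<open>1 \<le> t\<close> by (intro power_mono) auto
  finally have "0 \<le> g t" unfolding g_def by simp
  have "(2 * u - 1) ^ m \<le> (2 * u) ^ m" using \<open>1 \<le> t\<close> \<open>t \<le> u\<close> by (intro power_mono) auto
  also have "\<dots> = t * u ^ m" unfolding t_def by (simp add: power_mult_distrib)
  also have "\<dots> \<le> u ^ m * (u - m)"
    using zero_le_power[of u m] \<open>1 \<le> t\<close> \<open>t \<le> u\<close> unfolding u_def by (simp add: algebra_simps)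
  also have "\<dots> \<le> u * (u - 1) ^ m"
    using \<open>1 \<le> t\<close> \<open>t \<le> u\<close> by (intro Bernoulli_inequality_scaled) simp
  finally have "g u \<le> 0" unfolding g_def by simp
  have "continuous_on {t..u} g" unfolding g_def by (intro continuous_intros)
  then obtain s where s: "t \<le> s" "g s = 0"
    using IVT2'[of g u 0 t] \<open>0 \<le> g t\<close> \<open>g u \<le> 0\<close> \<open>t \<le> u\<close> by auto
  have "(1 - s) ^ m = (- 1) ^ m * (s - 1) ^ m" "(1 - 2 * s) ^ m = (- 1) ^ m * (2 * s - 1) ^ m"
    by (simp_all add: power_minus[symmetric])
  then have "(- s) * (1 + - s) ^ m + (1 + 2 * - s) ^ m = (- 1) ^ m * g s"
    unfolding g_def by (simp add: algebra_simps)
  then show ?thesis using s unfolding t_def by (intro exI[of _ "- s"]) simp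
qed

lemma six_tree_bracket_lower:
  fixes t :: real
  assumes "t = 2 ^ k"
  shows "t * (t\<^sup>2 - 3 * t + 1) * (t - 1) ^ k \<le> (2 * t\<^sup>2 - 4 * t + 1) * (2 * t - 1) ^ k"
proof (cases "k = 0")
  case True
  then show ?thesis using assms by (simp add: power2_eq_square)
next
  case False
  then have "2 \<le> t" using assms power_increasing[of 1 k "2::real"] by simp
  have "t * (t - 1) ^ k = (2 * t - 2) ^ k"
    using assms by (simp add: power_mult_distrib[symmetric] algebra_simps)
  also have "\<dots> \<le> (2 * t - 1) ^ k" using \<open>2 \<le> t\<close> by (intro power_mono) auto
  finally have less_shifted: "t * (t - 1) ^ k \<le> (2 * t - 1) ^ k" .
  have "(t\<^sup>2 - 3 * t + 1) * (t * (t - 1) ^ k) \<le> (2 * t\<^sup>2 - 4 * t + 1) * (t * (t - 1) ^ k)"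
    using \<open>2 \<le> t\<close> mult_nonneg_nonneg[of t "t - 1"]
    by (intro mult_right_mono) (simp_all add: power2_eq_square algebra_simps)
  also have "\<dots> \<le> (2 * t\<^sup>2 - 4 * t + 1) * (2 * t - 1) ^ k"
  proof (rule mult_left_mono[OF less_shifted])
    have "0 \<le> t * (t - 2)" using \<open>2 \<le> t\<close> by simp
    then show "0 \<le> 2 * t\<^sup>2 - 4 * t + 1" by (simp add: power2_eq_square algebra_simps)
  qed
  finally show ?thesis by (simp add: algebra_simps)
qed

lemma six_tree_bracket_upper:
  fixes u :: real
  assumes "u = 4 * 2 ^ k + real k + 3"
  shows "(2 * u\<^sup>2 - 4 * u + 1) * (2 * u - 1) ^ k \<le> u * (u\<^sup>2 - 3 * u + 1) * (u - 1) ^ k"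
proof -
  have "1 \<le> (2::real) ^ k" by simp
  then have "7 \<le> u" using assms by linarith
  then have "0 \<le> u * (u - 6)" by simp
  then have half: "u\<^sup>2 / 2 \<le> u\<^sup>2 - 3 * u + 1" by (simp add: power2_eq_square algebra_simps)
  have "(2 * u\<^sup>2 - 4 * u + 1) * (2 * u - 1) ^ k \<le> (2 * u\<^sup>2) * (2 * u) ^ k"
    using \<open>7 \<le> u\<close> mult_nonneg_nonneg[of u "u - 2"]
    by (intro mult_mono power_mono) (simp_all add: power2_eq_square algebra_simps)
  also have "\<dots> = (u\<^sup>2 / 2) * (4 * 2 ^ k) * u ^ k" by (simp add: power_mult_distrib)
  also have "\<dots> \<le> (u\<^sup>2 - 3 * u + 1) * (u - k) * u ^ k"
  proof (intro mult_right_mono mult_mono)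
    show "4 * 2 ^ k \<le> u - k" using assms by simp
    have "0 \<le> u\<^sup>2 / 2" by simp
    then show "0 \<le> u\<^sup>2 - 3 * u + 1" using half by linarith
    show "0 \<le> u ^ k" using \<open>7 \<le> u\<close> by simp
  qed (use half in simp_all)
  also have "\<dots> \<le> (u\<^sup>2 - 3 * u + 1) * (u * (u - 1) ^ k)"
    using Bernoulli_inequality_scaled[of u k] \<open>7 \<le> u\<close> half
    by (subst mult.assoc, intro mult_left_mono) (simp_all add: mult.commute)
  finally show ?thesis by (simp add: algebra_simps)
qed

lemma six_tree_poly_root:
  "\<exists>x::real. x \<le> - (2 ^ k) \<and>
     x * (1 + x) * (1 + 3 * x + x\<^sup>2) * (1 + x) ^ k + (1 + x) * (1 + 4 * x + 2 * x\<^sup>2) * (1 + 2 * x) ^ k = 0"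
proof -
  define g where
    "g s = s * (s\<^sup>2 - 3 * s + 1) * (s - 1) ^ k - (2 * s\<^sup>2 - 4 * s + 1) * (2 * s - 1) ^ k" for s :: real
  define t :: real where "t = 2 ^ k"
  define u where "u = 4 * t + k + 3"
  have "t \<le> u" unfolding t_def u_def by simp
  have "g t \<le> 0" using six_tree_bracket_lower[OF t_def] unfolding g_def by simp
  have "0 \<le> g u" using six_tree_bracket_upper[of u k] unfolding g_def u_def t_def by simp
  have "continuous_on {t..u} g" unfolding g_def by (intro continuous_intros)
  then obtain s where s: "t \<le> s" "g s = 0"
    using IVT'[of g t 0 u] \<open>g t \<le> 0\<close> \<open>0 \<le> g u\<close> \<open>t \<le> u\<close> by auto
  have "(1 - s) ^ k = (- 1) ^ k * (s - 1) ^ k" "(1 - 2 * s) ^ k = (- 1) ^ k * (2 * s - 1) ^ k"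
    by (simp_all add: power_minus[symmetric])
  then have "(- s) * (1 + - s) * (1 + 3 * - s + (- s)\<^sup>2) * (1 + - s) ^ k
      + (1 + - s) * (1 + 4 * - s + 2 * (- s)\<^sup>2) * (1 + 2 * - s) ^ k = (- 1) ^ k * (s - 1) * g s"
    unfolding g_def by (simp add: algebra_simps power2_eq_square)
  then show ?thesis using s unfolding t_def by (intro exI[of _ "- s"]) simp
qed

lemma M_T_odd_ge: "2 ^ m \<le> M_T (2 * m + 1)"
proof -
  obtain x :: real where x: "x \<le> - (2 ^ m)" "x * (1 + x) ^ m + (1 + 2 * x) ^ m = 0"
    using spider_poly_root by blast
  then have "indep_sum (2 * m + 1) (parent_graph spider_parent) (\<lambda>_. True) x = 0"
    by (simp only: spider_indep_sum)
  then have "\<bar>x\<bar> \<le> M_T (2 * m + 1)" by (intro spider.abs_root_le_M_T) simp_all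
  then show ?thesis using x(1) by simp
qed

lemma M_T_even_ge: "2 ^ k \<le> M_T (2 * k + 6)"
proof -
  obtain x :: real where x: "x \<le> - (2 ^ k)"
    "x * (1 + x) * (1 + 3 * x + x\<^sup>2) * (1 + x) ^ k + (1 + x) * (1 + 4 * x + 2 * x\<^sup>2) * (1 + 2 * x) ^ k = 0"
    using six_tree_poly_root by blast
  then have "indep_sum (2 * k + 6) (parent_graph six_tree_parent) (\<lambda>_. True) x = 0"
    by (simp only: six_tree_indep_sum)
  then have "\<bar>x\<bar> \<le> M_T (2 * k + 6)" by (intro six_tree.abs_root_le_M_T) simp_all
  then show ?thesis using x(1) by simp
qed

text \<open>The first two and four vertices of the spider form paths, with independence roots
  \<open>-1/2\<close> and \<open>-1\<close>.\<close>

lemma M_T_2_ge: "1 / 2 \<le> M_T 2"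
proof -
  have "indep_sum 2 (parent_graph spider_parent) (\<lambda>_. True) (- 1 / 2) = 0"
    by (simp add: numeral_2_eq_2 indep_sum_Suc indep_sum_0 parent_graph_def spider_parent_def)
  then show ?thesis using spider.abs_root_le_M_T[of 2 "- 1 / 2"] by simp
qed

lemma M_T_4_ge: "1 \<le> M_T 4"
proof -
  have "indep_sum 4 (parent_graph spider_parent) (\<lambda>_. True) (- 1) = 0"
    by (simp add: eval_nat_numeral indep_sum_Suc indep_sum_0 parent_graph_def spider_parent_def)
  then show ?thesis using spider.abs_root_le_M_T[of 4 "- 1"] by simp
qed

theorem proposition3:
  fixes n :: nat
  assumes "n \<ge> 1"
  shows "M_T n \<ge> (if odd n then 2 powr ((real n - 1) / 2) else 2 powr ((real n - 6) / 2))"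
proof (cases "odd n")
  case True
  then obtain m where n: "n = 2 * m + 1" by (rule oddE)
  have "2 powr ((real n - 1) / 2) = 2 ^ m" unfolding n by (simp add: powr_realpow)
  then show ?thesis using True M_T_odd_ge[of m] n by simp
next
  case False
  then obtain h where n: "n = 2 * h" by (metis evenE)
  consider "n = 2" | "n = 4" | k where "n = 2 * k + 6"
  proof (cases "3 \<le> h")
    case True
    then show thesis using that(3)[of "h - 3"] n by simp
  next
    case False
    then have "h = 1 \<or> h = 2" using n assms by auto
    then show thesis using that(1,2) n by auto
  qed
  then show ?thesis
  proof cases
    case (3 k)
    have "2 powr ((real n - 6) / 2) = 2 ^ k" unfolding 3 by (simp add: powr_realpow)
    then show ?thesis using False M_T_even_ge[of k] 3 by simp
  qed (use M_T_2_ge M_T_4_ge in \<open>simp_all add: powr_minus powr_numeral\<close>)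
qed

end
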